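(* Let $A\in\mathbb{R}^{n\times n}$ be symmetric positive definite, $b\in\mathbb{R}^n$, and let the $CD$ method (described in the context) be applied to $Ay=b$ with starting point $y_0\in\mathbb{R}^n$ and real parameters $\gamma_k\neq 0$ for all $k\ge 0$. Let $k\ge 2$ be such that $p_k$ is generated by the method. Then for $0\le i\le k$, $$(Ap_k)^T(Ap_i)=\begin{cases}\|Ap_k\|^2, & i=k,\\[2pt] \dfrac{1}{\gamma_{k-1}}\,p_k^TAp_k, & i=k-1,\\[2pt] 0, & i\le k-2.\end{cases}$$
   Context: The $CD$ method for solving $Ay=b$, with $A$ symmetric positive definite, starting point $y_0\in\mathbb{R}^n$ and nonzero real parameters $\gamma_0,\gamma_1,\dots$, is the following iteration (all norms Euclidean). Set $r_0=b-Ay_0$; if $r_0=0$ stop; set $p_0=r_0$. For $k=0,1,2,\dots$: compute $a_k=\dfrac{r_k^Tp_k}{p_k^TAp_k}$, $y_{k+1}=y_k+a_kp_k$, $r_{k+1}=r_k-a_kAp_k$; if $r_{k+1}=0$ stop; otherwise set $\sigma_k=\gamma_k\dfrac{\|Ap_k\|^2}{p_k^TAp_k}$ and, if $k=0$, $p_1=\gamma_0Ap_0-\sigma_0p_0$, while if $k\ge1$, $\omega_k=\gamma_k\dfrac{(Ap_k)^T(Ap_{k-1})}{p_{k-1}^TAp_{k-1}}$ and $p_{k+1}=\gamma_kAp_k-\sigma_kp_k-\omega_kp_{k-1}$. *)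

theory Defs
  imports "HOL-Analysis.Analysis"
begin

definition spd :: "real^'n^'n \<Rightarrow> bool" where
  "spd A \<longleftrightarrow> transpose A = A \<and> (\<forall>x. x \<noteq> 0 \<longrightarrow> x \<bullet> (A *v x) > 0)"

text \<open>State of the CD iteration after step k: (y_k, r_k, p_k, p_{k-1}).
  For k = 0 the last component is a dummy (0) and is never used.
  Termination (r = 0) is not built in; it is expressed by the hypothesis
  that all residuals r_0, ..., r_k are nonzero (p_k is then generated).\<close>
fun cd_state :: "real^'n^'n \<Rightarrow> real^'n \<Rightarrow> real^'n \<Rightarrow> (nat \<Rightarrow> real) \<Rightarrow> nat
      \<Rightarrow> (real^'n) \<times> (real^'n) \<times> (real^'n) \<times> (real^'n)" where
  "cd_state A b y0 \<gamma> 0 = (y0, b - A *v y0, b - A *v y0, 0)"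
| "cd_state A b y0 \<gamma> (Suc k) =
     (let (y, r, p, pp) = cd_state A b y0 \<gamma> k;
          a = (r \<bullet> p) / (p \<bullet> (A *v p));
          y' = y + a *\<^sub>R p;
          r' = r - a *\<^sub>R (A *v p);
          \<sigma> = \<gamma> k * (norm (A *v p))\<^sup>2 / (p \<bullet> (A *v p));
          p' = (if k = 0 then \<gamma> 0 *\<^sub>R (A *v p) - \<sigma> *\<^sub>R p
                else (let \<omega> = \<gamma> k * ((A *v p) \<bullet> (A *v pp)) / (pp \<bullet> (A *v pp))
                      in \<gamma> k *\<^sub>R (A *v p) - \<sigma> *\<^sub>R p - \<omega> *\<^sub>R pp))
      in (y', r', p', p))"

definition cd_y where "cd_y A b y0 \<gamma> k = fst (cd_state A b y0 \<gamma> k)"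
definition cd_r where "cd_r A b y0 \<gamma> k = fst (snd (cd_state A b y0 \<gamma> k))"
definition cd_p where "cd_p A b y0 \<gamma> k = fst (snd (snd (cd_state A b y0 \<gamma> k)))"

definition cd_generated where
  "cd_generated A b y0 \<gamma> k \<longleftrightarrow> (\<forall>j\<le>k. cd_r A b y0 \<gamma> j \<noteq> 0)"

end

theory Submission
  imports Defs
begin

text \<open>The directions of the CD method satisfy the three-term recurrence
  \<gamma>_j A p_j = p_(j+1) + \<sigma>_j p_j + \<omega>_j p_(j-1), so A p_i lies in the span of
  p_0, ..., p_(i+1). By induction the directions are mutually A-conjugate: \<sigma>_m and
  \<omega>_m are chosen to make p_(m+1) conjugate to p_m and p_(m-1), and conjugacy to
  older directions comes for free from the span property. The directions never
  vanish because the residuals stay in their span and are orthogonal to all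
  previous ones. Pairing A p_k with the recurrence for A p_i then gives the
  claimed values of (A p_k)^T (A p_i).\<close>

lemma inner_mult_vec_symmetric:
  fixes A :: "real^'n^'n"
  assumes "transpose A = A"
  shows "x \<bullet> (A *v y) = (A *v x) \<bullet> y"
  by (metis assms dot_lmul_matrix vector_transpose_matrix)

lemma inner_span_eq_0:
  fixes x v :: "'a::real_inner"
  assumes "v \<in> span S" and "\<And>s. s \<in> S \<Longrightarrow> x \<bullet> s = 0"
  shows "x \<bullet> v = 0"
  using orthogonal_to_span[OF assms(1)] assms(2) by (simp add: orthogonal_def)

locale cd_method =
  fixes A :: "real^'n^'n" and b y0 :: "real^'n" and \<gamma> :: "nat \<Rightarrow> real"
  assumes spd: "spd A" and gamma_nonzero: "\<gamma> j \<noteq> 0"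
begin

abbreviation p :: "nat \<Rightarrow> real^'n" where "p \<equiv> cd_p A b y0 \<gamma>"
abbreviation r :: "nat \<Rightarrow> real^'n" where "r \<equiv> cd_r A b y0 \<gamma>"

definition \<sigma> :: "nat \<Rightarrow> real" where
  "\<sigma> k = \<gamma> k * (norm (A *v p k))\<^sup>2 / (p k \<bullet> (A *v p k))"

text \<open>Setting \<omega> 0 = 0 gives the recurrence the same shape for k = 0,
  where p (k - 1) is the junk value p 0.\<close>
definition \<omega> :: "nat \<Rightarrow> real" where
  "\<omega> k = (if k = 0 then 0
     else \<gamma> k * ((A *v p k) \<bullet> (A *v p (k - 1))) / (p (k - 1) \<bullet> (A *v p (k - 1))))"

lemma A_symmetric: "x \<bullet> (A *v y) = (A *v x) \<bullet> y"
  using spd by (simp add: spd_def inner_mult_vec_symmetric)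

lemma cd_p_A_cd_p_nonzero: "p k \<noteq> 0 \<Longrightarrow> p k \<bullet> (A *v p k) \<noteq> 0"
  using spd by (metis spd_def less_irrefl)

lemma cd_p_0: "p 0 = r 0"
  by (simp add: cd_p_def cd_r_def)

lemma cd_r_Suc: "r (Suc k) = r k - ((r k \<bullet> p k) / (p k \<bullet> (A *v p k))) *\<^sub>R (A *v p k)"
  by (simp add: cd_p_def cd_r_def Let_def case_prod_unfold)

lemma cd_p_Suc: "p (Suc k) = \<gamma> k *\<^sub>R (A *v p k) - \<sigma> k *\<^sub>R p k - \<omega> k *\<^sub>R p (k - 1)"
proof (cases k)
  case 0
  then show ?thesis
    by (simp add: cd_p_def \<sigma>_def \<omega>_def Let_def case_prod_unfold)
next
  case (Suc j)
  have "snd (snd (snd (cd_state A b y0 \<gamma> (Suc j)))) = p j"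
    by (simp add: cd_p_def Let_def case_prod_unfold)
  then show ?thesis
    using Suc by (simp add: cd_p_def \<sigma>_def \<omega>_def Let_def case_prod_unfold)
qed

lemma three_term_recurrence:
  "\<gamma> k *\<^sub>R (A *v p k) = p (Suc k) + \<sigma> k *\<^sub>R p k + \<omega> k *\<^sub>R p (k - 1)"
  by (simp add: cd_p_Suc)

lemma A_cd_p_in_span: "A *v p k \<in> span (p ` {..Suc k})"
proof -
  have "A *v p k = (1 / \<gamma> k) *\<^sub>R (p (Suc k) + \<sigma> k *\<^sub>R p k + \<omega> k *\<^sub>R p (k - 1))"
    using gamma_nonzero[of k] three_term_recurrence[of k, symmetric] by simp
  also have "\<dots> \<in> span (p ` {..Suc k})"
    by (intro span_mul span_add span_base) auto
  finally show ?thesis .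
qed

lemma cd_r_in_span: "r k \<in> span (p ` {..k})"
proof (induction k)
  case 0
  then show ?case by (simp add: cd_p_0 span_base)
next
  case (Suc k)
  have "span (p ` {..k}) \<subseteq> span (p ` {..Suc k})"
    by (intro span_mono image_mono) auto
  then show ?case
    unfolding cd_r_Suc using Suc.IH A_cd_p_in_span[of k] by (intro span_diff span_mul) auto
qed

lemma A_cd_p_inner_span_eq_0:
  assumes "\<forall>j<k. p k \<bullet> (A *v p j) = 0" and "v \<in> span (p ` {..<k})"
  shows "(A *v p k) \<bullet> v = 0"
  using assms(2) by (rule inner_span_eq_0) (use assms(1) A_symmetric in auto)

lemma A_cd_p_inner_A_cd_p_distant:
  assumes "\<forall>j<k. p k \<bullet> (A *v p j) = 0" and "Suc i < k"
  shows "(A *v p k) \<bullet> (A *v p i) = 0"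
proof (rule A_cd_p_inner_span_eq_0[OF assms(1)])
  have "p ` {..Suc i} \<subseteq> p ` {..<k}"
    using assms(2) by auto
  then show "A *v p i \<in> span (p ` {..<k})"
    using A_cd_p_in_span span_mono by blast
qed

lemma A_cd_p_inner_A_cd_p_previous:
  assumes "\<forall>j<k. p k \<bullet> (A *v p j) = 0" and "k > 0"
  shows "\<gamma> (k - 1) * ((A *v p k) \<bullet> (A *v p (k - 1))) = p k \<bullet> (A *v p k)"
proof -
  have "\<gamma> (k - 1) * ((A *v p k) \<bullet> (A *v p (k - 1)))
      = (A *v p k) \<bullet> (p k + \<sigma> (k - 1) *\<^sub>R p (k - 1) + \<omega> (k - 1) *\<^sub>R p (k - 1 - 1))"
    using three_term_recurrence[of "k - 1"] assms(2) by (simp flip: inner_scaleR_right)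
  also have "\<dots> = (A *v p k) \<bullet> p k"
    using assms A_symmetric[of "p k"] by (simp add: inner_add_right)
  finally show ?thesis
    by (simp add: inner_commute)
qed

text \<open>\<sigma> m kills the component along p m, \<omega> m the one along p (m - 1);
  the older directions are handled by the span property.\<close>
lemma cd_p_Suc_conjugate:
  assumes nonzero: "\<forall>j\<le>m. p j \<noteq> 0"
    and conj: "\<forall>i\<le>m. \<forall>j<i. p i \<bullet> (A *v p j) = 0"
    and "j \<le> m"
  shows "p (Suc m) \<bullet> (A *v p j) = 0"
proof -
  have expand: "p (Suc m) \<bullet> (A *v p j) = \<gamma> m * ((A *v p m) \<bullet> (A *v p j))
      - \<sigma> m * (p m \<bullet> (A *v p j)) - \<omega> m * (p (m - 1) \<bullet> (A *v p j))"
    by (simp add: cd_p_Suc inner_diff_left)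
  consider "j = m" | "m > 0" "j = m - 1" | "Suc j < m"
    using \<open>j \<le> m\<close> by linarith
  then show ?thesis
  proof cases
    case 1
    have "m > 0 \<Longrightarrow> p (m - 1) \<bullet> (A *v p m) = 0"
      using conj A_symmetric[of "p (m - 1)" "p m"] by (simp add: inner_commute)
    then have "\<omega> m * (p (m - 1) \<bullet> (A *v p m)) = 0"
      by (simp add: \<omega>_def)
    moreover have "\<sigma> m * (p m \<bullet> (A *v p m)) = \<gamma> m * ((A *v p m) \<bullet> (A *v p m))"
      using cd_p_A_cd_p_nonzero nonzero by (simp add: \<sigma>_def power2_norm_eq_inner)
    ultimately show ?thesis
      using expand 1 by simp
  next
    case 2
    have "p m \<bullet> (A *v p (m - 1)) = 0"
      using conj 2 by simp
    moreover have "\<omega> m * (p (m - 1) \<bullet> (A *v p (m - 1)))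
        = \<gamma> m * ((A *v p m) \<bullet> (A *v p (m - 1)))"
      using cd_p_A_cd_p_nonzero nonzero 2 by (simp add: \<omega>_def)
    ultimately show ?thesis
      using expand 2 by simp
  next
    case 3
    then show ?thesis
      using expand conj A_cd_p_inner_A_cd_p_distant[of m j] by simp
  qed
qed

lemma cd_r_Suc_orthogonal:
  assumes "p m \<noteq> 0" and "\<forall>j<m. p m \<bullet> (A *v p j) = 0"
    and "\<forall>j<m. r m \<bullet> p j = 0" and "j \<le> m"
  shows "r (Suc m) \<bullet> p j = 0"
proof (cases "j = m")
  case True
  then show ?thesis
    using cd_p_A_cd_p_nonzero[OF assms(1)]
    by (simp add: cd_r_Suc inner_diff_left inner_commute[of "A *v p m"])
next
  case False
  then show ?thesis
    using assms A_symmetric[of "p m"] by (simp add: cd_r_Suc inner_diff_left)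
qed

text \<open>If p (Suc m) = 0, the residual r (Suc m) would lie in the span of
  p 0, ..., p m while being orthogonal to it.\<close>
lemma cd_p_Suc_nonzero:
  assumes "r (Suc m) \<noteq> 0" and "\<forall>j\<le>m. r (Suc m) \<bullet> p j = 0"
  shows "p (Suc m) \<noteq> 0"
proof
  assume "p (Suc m) = 0"
  then have "p ` {..Suc m} = insert 0 (p ` {..m})"
    by (auto simp: atMost_Suc)
  then have "r (Suc m) \<in> span (p ` {..m})"
    using cd_r_in_span[of "Suc m"] by simp
  then have "r (Suc m) \<bullet> r (Suc m) = 0"
    by (rule inner_span_eq_0) (use assms(2) in auto)
  with assms(1) show False
    by simp
qed

lemma cd_invariant:
  assumes "\<forall>j\<le>m. r j \<noteq> 0"
  shows "(\<forall>j\<le>m. p j \<noteq> 0) \<and> (\<forall>i\<le>m. \<forall>j<i. p i \<bullet> (A *v p j) = 0) \<and> (\<forall>j<m. r m \<bullet> p j = 0)"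
  using assms
proof (induction m)
  case 0
  then show ?case by (simp add: cd_p_0)
next
  case (Suc m)
  then have nonzero: "\<forall>j\<le>m. p j \<noteq> 0"
    and conj: "\<forall>i\<le>m. \<forall>j<i. p i \<bullet> (A *v p j) = 0"
    and orth: "\<forall>j<m. r m \<bullet> p j = 0"
    by auto
  have orth': "\<forall>j\<le>m. r (Suc m) \<bullet> p j = 0"
    using cd_r_Suc_orthogonal nonzero conj orth by simp
  moreover have "p (Suc m) \<noteq> 0"
    using cd_p_Suc_nonzero Suc.prems orth' by blast
  moreover have "\<forall>j<Suc m. p (Suc m) \<bullet> (A *v p j) = 0"
    using cd_p_Suc_conjugate nonzero conj by simp
  ultimately show ?case
    using nonzero conj by (auto simp: le_Suc_eq)
qed

lemma cd_p_conjugate: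
  assumes "cd_generated A b y0 \<gamma> k" and "j < k"
  shows "p k \<bullet> (A *v p j) = 0"
  using cd_invariant[of k] assms by (simp add: cd_generated_def)

end

theorem lemma2:
  fixes A :: "real^'n^'n" and b y0 :: "real^'n" and \<gamma> :: "nat \<Rightarrow> real"
    and k i :: nat
  assumes "spd A"
    and "\<forall>j. \<gamma> j \<noteq> 0"
    and "k \<ge> 2"
    and "cd_generated A b y0 \<gamma> k"
    and "i \<le> k"
  shows "(A *v cd_p A b y0 \<gamma> k) \<bullet> (A *v cd_p A b y0 \<gamma> i) =
    (if i = k then (norm (A *v cd_p A b y0 \<gamma> k))\<^sup>2
     else if i = k - 1 then (1 / \<gamma> (k - 1)) * (cd_p A b y0 \<gamma> k \<bullet> (A *v cd_p A b y0 \<gamma> k))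
     else 0)"
proof -
  interpret cd_method A b y0 \<gamma>
    using assms(1,2) by unfold_locales auto
  have conj: "\<forall>j<k. p k \<bullet> (A *v p j) = 0"
    using cd_p_conjugate assms(4) by blast
  consider "i = k" | "i = k - 1" | "Suc i < k"
    using assms(3,5) by linarith
  then show ?thesis
  proof cases
    case 1
    then show ?thesis by (simp add: power2_norm_eq_inner)
  next
    case 2
    then show ?thesis
      using A_cd_p_inner_A_cd_p_previous[OF conj] assms(2,3) by (auto simp: field_simps)
  next
    case 3
    then show ?thesis
      using A_cd_p_inner_A_cd_p_distant[OF conj] by simp
  qed
qed

end
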